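(* Let $a\in\mathbb{R}$, $w\in\mathbb{C}\setminus\mathbb{R}$ with $\varphi := |\operatorname{Arg}(w)|\in(0,\pi/2]$, and $\tau>0$. Then all roots of $z + a - we^{-\tau z} = 0$ have negative real parts if and only if $$a > 0\quad\text{and}\quad |w| < \frac{1}{\tau}R(-\tau a;\varphi).$$
   Context: $\operatorname{Arg}(w)\in(-\pi,\pi]$ is the principal argument. For $\varphi\in(0,\pi/2]$, $C(\theta;\varphi) := \theta\cot(\theta-\varphi)$ is a strictly decreasing bijection from $[0,\varphi)$ onto $(-\infty,0]$ with inverse $C^{-1}(\cdot;\varphi)$, and $R(r;\varphi) := -C^{-1}(r;\varphi)/\sin(C^{-1}(r;\varphi)-\varphi)$ for $r\le0$. *)

theory Defs
  imports "HOL-Analysis.Analysis"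
begin

text \<open>C(theta; phi) = theta * cot(theta - phi), a strictly decreasing bijection
  from [0, phi) onto (-infinity, 0] for phi in (0, pi/2].\<close>
definition Cfun :: "real \<Rightarrow> real \<Rightarrow> real" where
  "Cfun \<theta> \<phi> = \<theta> * cot (\<theta> - \<phi>)"

definition Cinv :: "real \<Rightarrow> real \<Rightarrow> real" where
  "Cinv r \<phi> = (THE \<theta>. 0 \<le> \<theta> \<and> \<theta> < \<phi> \<and> Cfun \<theta> \<phi> = r)"

definition Rfun :: "real \<Rightarrow> real \<Rightarrow> real" where
  "Rfun r \<phi> = - Cinv r \<phi> / sin (Cinv r \<phi> - \<phi>)"

end

theory Submission imports Defs begin

text \<open>Substituting \<open>s = \<tau> z\<close> and conjugating if necessary reduces the problem to
  \<open>s + b = W exp (- s)\<close> with \<open>b = \<tau> a\<close> and \<open>W = \<rho> cis \<phi>\<close>, whose roots \<open>x + i y\<close> satisfy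
  \<open>x + b = \<rho> exp (- x) cos (\<phi> - y)\<close> and \<open>y = \<rho> exp (- x) sin (\<phi> - y)\<close>.  For \<open>x = 0\<close> these say
  that \<open>i \<theta>\<close> with \<open>\<theta> = C\<inverse>(-b)\<close> is a root exactly when \<open>\<rho> = R(-b)\<close>; moreover
  \<open>R(-b)\<^sup>2 = b\<^sup>2 + \<theta>\<^sup>2\<close>.  If \<open>b > 0\<close> and \<open>\<rho> < R(-b)\<close>, no root has \<open>x \<ge> 0\<close>: for \<open>|y| \<ge> \<theta>\<close> the
  modulus \<open>|x + b + i y| \<ge> R(-b)\<close> exceeds \<open>\<rho> exp (- x)\<close>, and for \<open>|y| < \<theta>\<close> the equations force
  \<open>0 < y\<close> and \<open>C(y) \<le> -b = C(\<theta>)\<close>, contradicting the monotonicity of \<open>C\<close>.  Otherwise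
  \<open>x = - C(y) - b \<ge> 0\<close> solves the first equation for every \<open>y\<close> beyond \<open>0\<close> resp. \<open>\<theta>\<close>, and the
  modulus \<open>\<rho>\<close> needed for the second one grows without bound as \<open>y \<rightarrow> \<phi>\<close>, so the intermediate
  value theorem yields a root in the closed right half-plane.\<close>

lemma cot_antimono:
  assumes "0 < a" "a \<le> c" "c < pi"
  shows "cot c \<le> cot a"
proof -
  have "0 < sin a" "0 < sin c" using assms by (auto intro: sin_gt_zero)
  then have "cot a - cot c = sin (c - a) / (sin a * sin c)"
    by (simp add: cot_def sin_diff field_simps)
  moreover have "0 \<le> sin (c - a)" using assms by (intro sin_ge_zero) auto
  ultimately have "0 \<le> cot a - cot c" using \<open>0 < sin a\<close> \<open>0 < sin c\<close> by simp
  then show ?thesis by simp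
qed

lemma Cfun_eq: "Cfun t \<phi> = - (t * cot (\<phi> - t))"
proof -
  have "t - \<phi> = - (\<phi> - t)" by simp
  then show ?thesis unfolding Cfun_def by (simp only: cot_minus)
qed

lemma Cfun_strict_antimono:
  assumes "0 \<le> t1" "t1 < t2" "t2 < \<phi>" "\<phi> \<le> pi/2"
  shows "Cfun t2 \<phi> < Cfun t1 \<phi>"
proof -
  have pos: "0 < cot (\<phi> - t2)" using assms by (intro cot_gt_zero) auto
  have "t1 * cot (\<phi> - t1) \<le> t1 * cot (\<phi> - t2)"
    using assms by (intro mult_left_mono cot_antimono) auto
  also have "\<dots> < t2 * cot (\<phi> - t2)" using assms pos by (intro mult_strict_right_mono) auto
  finally show ?thesis by (simp add: Cfun_eq)
qed

lemma Cfun_inj: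
  assumes "0 \<le> s" "s < \<phi>" "0 \<le> t" "t < \<phi>" "\<phi> \<le> pi/2" "Cfun s \<phi> = Cfun t \<phi>"
  shows "s = t"
  using Cfun_strict_antimono[of s t \<phi>] Cfun_strict_antimono[of t s \<phi>] assms
  by (cases s t rule: linorder_cases) auto

lemma Cfun_attains_neg:
  assumes "0 < b" "0 < \<phi>" "\<phi> \<le> pi/2"
  obtains t where "0 < t" "t < \<phi>" "Cfun t \<phi> = - b"
proof -
  define g where "g t = t * cos (\<phi> - t) - b * sin (\<phi> - t)" for t
  have "0 < sin \<phi>" using assms by (intro sin_gt_zero) auto
  then have "g 0 < 0" using assms by (simp add: g_def)
  moreover have "0 < g \<phi>" using assms by (simp add: g_def)
  moreover have "continuous_on {0..\<phi>} g" unfolding g_def by (intro continuous_intros)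
  ultimately obtain t where t: "0 \<le> t" "t \<le> \<phi>" "g t = 0"
    using IVT'[of g 0 0 \<phi>] assms by auto
  with \<open>g 0 < 0\<close> \<open>0 < g \<phi>\<close> have "0 < t" "t < \<phi>" by (auto simp: order.order_iff_strict)
  moreover have "0 < sin (\<phi> - t)" using \<open>0 < t\<close> \<open>t < \<phi>\<close> assms by (intro sin_gt_zero) auto
  ultimately show ?thesis using t(3)
    by (intro that) (auto simp: Cfun_eq cot_def g_def field_simps)
qed

lemma Cinv_neg:
  assumes "0 < b" "0 < \<phi>" "\<phi> \<le> pi/2"
  shows "0 < Cinv (- b) \<phi>" "Cinv (- b) \<phi> < \<phi>" "Cfun (Cinv (- b) \<phi>) \<phi> = - b"
proof -
  obtain t where t: "0 < t" "t < \<phi>" "Cfun t \<phi> = - b"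
    using Cfun_attains_neg assms by blast
  have "Cinv (- b) \<phi> = t"
    unfolding Cinv_def using t assms by (intro the_equality) (auto intro: Cfun_inj)
  with t show "0 < Cinv (- b) \<phi>" "Cinv (- b) \<phi> < \<phi>" "Cfun (Cinv (- b) \<phi>) \<phi> = - b"
    by simp_all
qed

lemma Rfun_eq: "Rfun r \<phi> = Cinv r \<phi> / sin (\<phi> - Cinv r \<phi>)"
proof -
  have "sin (Cinv r \<phi> - \<phi>) = - sin (\<phi> - Cinv r \<phi>)" by (metis minus_diff_eq sin_minus)
  then show ?thesis unfolding Rfun_def by simp
qed

lemma Rfun_neg_polar:
  assumes "0 < b" "0 < \<phi>" "\<phi> \<le> pi/2"
  defines "\<theta> \<equiv> Cinv (- b) \<phi>"
  shows "b = Rfun (- b) \<phi> * cos (\<phi> - \<theta>)" "\<theta> = Rfun (- b) \<phi> * sin (\<phi> - \<theta>)"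
proof -
  have \<theta>: "0 < \<theta>" "\<theta> < \<phi>" "Cfun \<theta> \<phi> = - b" using Cinv_neg assms by simp_all
  have "0 < sin (\<phi> - \<theta>)" using \<theta> assms by (intro sin_gt_zero) auto
  then show "b = Rfun (- b) \<phi> * cos (\<phi> - \<theta>)" "\<theta> = Rfun (- b) \<phi> * sin (\<phi> - \<theta>)"
    using \<theta>(3) by (simp_all add: Rfun_eq Cfun_eq cot_def \<theta>_def)
qed

lemma polar_sum_squares:
  fixes p q r \<alpha> :: real
  assumes "p = r * cos \<alpha>" "q = r * sin \<alpha>"
  shows "p\<^sup>2 + q\<^sup>2 = r\<^sup>2"
  unfolding assms by (simp add: power_mult_distrib flip: distrib_left)

lemma char_eq_polar:
  assumes "w = rcis \<rho> \<phi>"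
  shows "s + of_real b - w * exp (- s) = 0 \<longleftrightarrow>
    Re s + b = \<rho> * exp (- Re s) * cos (\<phi> - Im s) \<and> Im s = \<rho> * exp (- Re s) * sin (\<phi> - Im s)"
proof -
  have "w * exp (- s) = of_real (\<rho> * exp (- Re s)) * (cis \<phi> * cis (- Im s))"
    using assms by (simp add: exp_eq_polar[of "- s"] rcis_def mult_ac)
  also have "\<dots> = of_real (\<rho> * exp (- Re s)) * cis (\<phi> - Im s)"
    by (simp add: cis_mult)
  finally have "w * exp (- s) = of_real (\<rho> * exp (- Re s)) * cis (\<phi> - Im s)" .
  then show ?thesis by (auto simp: complex_eq_iff)
qed

lemma char_root_Re_neg:
  assumes \<phi>: "0 < \<phi>" "\<phi> \<le> pi/2" and w: "w = rcis (cmod w) \<phi>"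
    and b: "0 < b" and small: "cmod w < Rfun (- b) \<phi>"
    and root: "s + of_real b - w * exp (- s) = 0"
  shows "Re s < 0"
proof (rule ccontr)
  assume "\<not> Re s < 0"
  define x y r where "x = Re s" and "y = Im s" and "r = cmod w * exp (- x)"
  define \<theta> R where "\<theta> = Cinv (- b) \<phi>" and "R = Rfun (- b) \<phi>"
  have "0 \<le> x" using \<open>\<not> Re s < 0\<close> by (simp add: x_def)
  have \<theta>: "0 < \<theta>" "\<theta> < \<phi>" "Cfun \<theta> \<phi> = - b" using Cinv_neg b \<phi> by (simp_all add: \<theta>_def)
  have R2: "b\<^sup>2 + \<theta>\<^sup>2 = R\<^sup>2"
    using Rfun_neg_polar[OF b \<phi>] by (intro polar_sum_squares) (simp_all add: \<theta>_def R_def)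
  have e1: "x + b = r * cos (\<phi> - y)" and e2: "y = r * sin (\<phi> - y)"
    using root char_eq_polar[OF w] by (simp_all add: x_def y_def r_def)
  have "0 \<le> r" by (simp add: r_def)
  have "r \<le> cmod w" using \<open>0 \<le> x\<close> by (simp add: r_def mult_left_le)
  then have "r < R" using small by (simp add: R_def)
  show False
  proof (cases "\<theta> \<le> \<bar>y\<bar>")
    case True
    have "b\<^sup>2 \<le> (x + b)\<^sup>2" using \<open>0 \<le> x\<close> b by (intro power_mono) auto
    moreover have "\<theta>\<^sup>2 \<le> y\<^sup>2" using True \<theta> by (metis abs_le_square_iff abs_of_pos)
    ultimately have "R\<^sup>2 \<le> r\<^sup>2" using R2 polar_sum_squares[OF e1 e2] by linarith
    with \<open>0 \<le> r\<close> \<open>r < R\<close> show False by (simp add: power_strict_mono leD)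
  next
    case False
    then have "0 < sin (\<phi> - y)" using \<theta> \<phi> by (intro sin_gt_zero) auto
    moreover have "0 < r" using e1 \<open>0 \<le> x\<close> b \<open>0 \<le> r\<close> by (cases "r = 0") auto
    ultimately have "0 < y" using e2 by (metis mult_pos_pos)
    have "y * cos (\<phi> - y) / sin (\<phi> - y) = r * cos (\<phi> - y)"
      using \<open>0 < sin (\<phi> - y)\<close> by (subst e2) simp
    then have "Cfun y \<phi> = - (x + b)" by (simp add: Cfun_eq cot_def e1)
    then have "Cfun y \<phi> \<le> Cfun \<theta> \<phi>" using \<theta> \<open>0 \<le> x\<close> by simp
    moreover have "Cfun \<theta> \<phi> < Cfun y \<phi>"
      using False \<open>0 < y\<close> \<theta> \<phi> by (intro Cfun_strict_antimono) auto
    ultimately show False by simp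
  qed
qed

definition root_modulus :: "real \<Rightarrow> real \<Rightarrow> real \<Rightarrow> real" where
  "root_modulus \<phi> b y = y * exp (- Cfun y \<phi> - b) / sin (\<phi> - y)"

lemma root_modulus_root:
  assumes "0 \<le> y" "y < \<phi>" "\<phi> \<le> pi/2" and w: "w = rcis (cmod w) \<phi>"
    and "root_modulus \<phi> b y = cmod w"
  defines "s \<equiv> Complex (- Cfun y \<phi> - b) y"
  shows "s + of_real b - w * exp (- s) = 0"
proof -
  have sin: "0 < sin (\<phi> - y)" using assms by (intro sin_gt_zero) auto
  have "cmod w * exp (- Re s) = y * (exp (- Cfun y \<phi> - b) * exp (Cfun y \<phi> + b)) / sin (\<phi> - y)"
    unfolding assms(5)[symmetric] by (simp add: s_def root_modulus_def ac_simps)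
  also have "\<dots> = y / sin (\<phi> - y)" by (simp flip: exp_add)
  finally have "cmod w * exp (- Re s) = y / sin (\<phi> - y)" .
  with sin have "Re s + b = cmod w * exp (- Re s) * cos (\<phi> - Im s)
      \<and> Im s = cmod w * exp (- Re s) * sin (\<phi> - Im s)"
    by (simp add: s_def Cfun_eq cot_def)
  then show ?thesis using char_eq_polar[OF w] by blast
qed

lemma root_modulus_unbounded:
  assumes "0 \<le> t0" "t0 < \<phi>" "\<phi> \<le> pi/2" "Cfun t0 \<phi> \<le> - b"
  obtains y where "t0 \<le> y" "y < \<phi>" "M \<le> root_modulus \<phi> b y"
proof -
  define M' where "M' = max M 0 + t0 / (\<phi> - t0)"
  \<comment> \<open>\<open>y\<close> solves \<open>y / (\<phi> - y) = M'\<close>, and \<open>root_modulus \<phi> b y \<ge> y / (\<phi> - y)\<close>\<close>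
  define y where "y = \<phi> * M' / (M' + 1)"
  have "0 \<le> t0 / (\<phi> - t0)" using assms by simp
  then have "0 \<le> M'" by (simp add: M'_def)
  then have "\<phi> - y = \<phi> / (M' + 1)" by (simp add: y_def field_simps)
  then have "0 < \<phi> - y" using assms \<open>0 \<le> M'\<close> by simp
  have "y = M' * (\<phi> - y)" using \<open>\<phi> - y = \<phi> / (M' + 1)\<close> by (simp add: y_def)
  then have ratio: "y / (\<phi> - y) = M'" using \<open>0 < \<phi> - y\<close>
    by (metis nonzero_mult_div_cancel_right less_irrefl)
  have "t0 / (\<phi> - t0) \<le> M'" by (simp add: M'_def)
  then have "t0 * (M' + 1) \<le> \<phi> * M'" using assms by (simp add: pos_divide_le_eq algebra_simps)
  then have "t0 \<le> y" using \<open>0 \<le> M'\<close> by (simp add: y_def pos_le_divide_eq)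
  have "0 \<le> y" using \<open>t0 \<le> y\<close> assms by simp
  have sin: "0 < sin (\<phi> - y)" "sin (\<phi> - y) \<le> \<phi> - y"
    using \<open>0 < \<phi> - y\<close> \<open>0 \<le> y\<close> assms by (auto intro: sin_gt_zero sin_x_le_x)
  have "Cfun y \<phi> \<le> Cfun t0 \<phi>"
    using Cfun_strict_antimono[of t0 y \<phi>] \<open>t0 \<le> y\<close> \<open>0 < \<phi> - y\<close> assms
    by (cases "t0 = y") auto
  then have "1 \<le> exp (- Cfun y \<phi> - b)" using assms by simp
  have "M \<le> y / (\<phi> - y)" using ratio \<open>0 \<le> t0 / (\<phi> - t0)\<close> by (simp add: M'_def)
  also have "\<dots> \<le> y / sin (\<phi> - y)" using sin \<open>0 \<le> y\<close> by (intro divide_left_mono) auto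
  also have "\<dots> \<le> root_modulus \<phi> b y"
    unfolding root_modulus_def using sin \<open>0 \<le> y\<close> \<open>1 \<le> exp (- Cfun y \<phi> - b)\<close>
    by (intro divide_right_mono) (auto intro: mult_left_le_one_le simp: mult_le_cancel_left1)
  finally show ?thesis using that \<open>t0 \<le> y\<close> \<open>0 < \<phi> - y\<close> by simp
qed

lemma char_root_Re_nonneg:
  assumes "0 \<le> t0" "t0 < \<phi>" "\<phi> \<le> pi/2" and w: "w = rcis (cmod w) \<phi>"
    and "Cfun t0 \<phi> \<le> - b" and "root_modulus \<phi> b t0 \<le> cmod w"
  obtains s where "s + of_real b - w * exp (- s) = 0" "0 \<le> Re s"
proof -
  obtain y1 where y1: "t0 \<le> y1" "y1 < \<phi>" "cmod w \<le> root_modulus \<phi> b y1"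
    using root_modulus_unbounded assms by blast
  have sin: "sin (\<phi> - y) \<noteq> 0" if "t0 \<le> y" "y \<le> y1" for y
    using that assms y1 sin_gt_zero[of "\<phi> - y"] by force
  have "continuous_on {t0..y1} (root_modulus \<phi> b)"
    unfolding root_modulus_def Cfun_eq by (intro continuous_intros) (auto simp: sin)
  then obtain y where y: "t0 \<le> y" "y \<le> y1" "root_modulus \<phi> b y = cmod w"
    using IVT'[of "root_modulus \<phi> b" t0 "cmod w" y1] assms y1 by auto
  have "Cfun y \<phi> \<le> Cfun t0 \<phi>"
    using Cfun_strict_antimono[of t0 y \<phi>] y y1 assms by (cases "t0 = y") auto
  moreover have "0 \<le> y" "y < \<phi>" using y y1 assms by simp_all
  ultimately show ?thesis
    using that[OF root_modulus_root[OF _ _ assms(3) w y(3)]] assms by simp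
qed

definition delay_stable :: "real \<Rightarrow> complex \<Rightarrow> real \<Rightarrow> bool" where
  "delay_stable a w \<tau> \<longleftrightarrow> (\<forall>z. z + of_real a - w * exp (- of_real \<tau> * z) = 0 \<longrightarrow> Re z < 0)"

lemma delay_stable_cnj: "delay_stable a (cnj w) \<tau> \<longleftrightarrow> delay_stable a w \<tau>"
proof -
  have "cnj (z + of_real a - w * exp (- of_real \<tau> * z))
      = cnj z + of_real a - cnj w * exp (- of_real \<tau> * cnj z)" for z
    by (simp add: exp_cnj)
  then have root_cnj: "z + of_real a - w * exp (- of_real \<tau> * z) = 0
      \<longleftrightarrow> cnj z + of_real a - cnj w * exp (- of_real \<tau> * cnj z) = 0" for z
    by (metis complex_cnj_zero_iff)
  have all_cnj: "(\<forall>z. P z) \<longleftrightarrow> (\<forall>z. P (cnj z))" for P :: "complex \<Rightarrow> bool"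
    by (metis complex_cnj_cnj)
  have "delay_stable a w \<tau> \<longleftrightarrow>
      (\<forall>z. cnj z + of_real a - w * exp (- of_real \<tau> * cnj z) = 0 \<longrightarrow> Re (cnj z) < 0)"
    unfolding delay_stable_def by (subst all_cnj) (rule refl)
  also have "\<dots> \<longleftrightarrow> delay_stable a (cnj w) \<tau>"
    unfolding delay_stable_def root_cnj[of "cnj _"] by simp
  finally show ?thesis ..
qed

lemma delay_stable_rescale:
  assumes "0 < \<tau>"
  shows "delay_stable a w \<tau> \<longleftrightarrow> delay_stable (\<tau> * a) (of_real \<tau> * w) 1"
proof -
  have eq: "of_real \<tau> * z + of_real (\<tau> * a) - of_real \<tau> * w * exp (- of_real 1 * (of_real \<tau> * z))
      = of_real \<tau> * (z + of_real a - w * exp (- of_real \<tau> * z))" for z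
    by (simp add: algebra_simps)
  have all_scale: "(\<forall>s. P s) \<longleftrightarrow> (\<forall>z. P (of_real \<tau> * z))" for P :: "complex \<Rightarrow> bool"
    using assms by (metis nonzero_mult_div_cancel_left of_real_eq_0_iff less_irrefl times_divide_eq_right)
  have "delay_stable (\<tau> * a) (of_real \<tau> * w) 1 \<longleftrightarrow>
      (\<forall>z. of_real \<tau> * (z + of_real a - w * exp (- of_real \<tau> * z)) = 0 \<longrightarrow> Re (of_real \<tau> * z) < 0)"
    unfolding delay_stable_def by (subst all_scale) (simp only: eq)
  also have "\<dots> \<longleftrightarrow> delay_stable a w \<tau>"
    using assms by (simp add: delay_stable_def mult_less_0_iff)
  finally show ?thesis ..
qed

lemma delay_stable_unit_iff:
  assumes \<phi>: "0 < \<phi>" "\<phi> \<le> pi/2" and w: "w = rcis (cmod w) \<phi>"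
  shows "delay_stable b w 1 \<longleftrightarrow> 0 < b \<and> cmod w < Rfun (- b) \<phi>"
  unfolding delay_stable_def of_real_1 mult_minus_left mult_1_left
proof
  assume stable: "\<forall>s. s + of_real b - w * exp (- s) = 0 \<longrightarrow> Re s < 0"
  have unstable: False
    if t0: "0 \<le> t0" "t0 < \<phi>" "Cfun t0 \<phi> \<le> - b" "root_modulus \<phi> b t0 \<le> cmod w" for t0
  proof -
    obtain s where "s + of_real b - w * exp (- s) = 0" "0 \<le> Re s"
      using char_root_Re_nonneg[OF t0(1,2) \<phi>(2) w t0(3,4)] .
    with stable show False by fastforce
  qed
  show "0 < b \<and> cmod w < Rfun (- b) \<phi>"
  proof (cases "0 < b")
    case False
    then show ?thesis using unstable[of 0] \<phi> by (simp add: Cfun_def root_modulus_def)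
  next
    case True
    define \<theta> where "\<theta> = Cinv (- b) \<phi>"
    have \<theta>: "0 < \<theta>" "\<theta> < \<phi>" "Cfun \<theta> \<phi> = - b" using Cinv_neg True \<phi> by (simp_all add: \<theta>_def)
    have "root_modulus \<phi> b \<theta> = Rfun (- b) \<phi>"
      using \<theta>(3) by (simp add: root_modulus_def Rfun_eq \<theta>_def)
    then have "\<not> Rfun (- b) \<phi> \<le> cmod w" using unstable[of \<theta>] \<theta> by auto
    with True show ?thesis by simp
  qed
next
  assume "0 < b \<and> cmod w < Rfun (- b) \<phi>"
  then show "\<forall>s. s + of_real b - w * exp (- s) = 0 \<longrightarrow> Re s < 0"
    using char_root_Re_neg[OF \<phi> w] by blast
qed

lemma rcis_abs_Arg: "w = rcis (cmod w) \<bar>Arg w\<bar> \<or> cnj w = rcis (cmod w) \<bar>Arg w\<bar>"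
proof (cases "0 \<le> Arg w")
  case True
  then show ?thesis by (simp add: rcis_cmod_Arg)
next
  case False
  then show ?thesis by (simp add: rcis_cnj)
qed

theorem mainTheorem14:
  fixes a \<tau> :: real and w :: complex
  \<comment> \<open>\<open>w \<notin> \<real>\<close> is implied by the bounds on \<open>Arg w\<close> and not used\<close>
  assumes "w \<notin> \<real>"
    and "0 < \<bar>Arg w\<bar>" and "\<bar>Arg w\<bar> \<le> pi / 2"
    and "\<tau> > 0"
  shows "(\<forall>z::complex. z + of_real a - w * exp (- of_real \<tau> * z) = 0 \<longrightarrow> Re z < 0)
     \<longleftrightarrow> (a > 0 \<and> cmod w < Rfun (- \<tau> * a) \<bar>Arg w\<bar> / \<tau>)"
proof -
  define \<phi> where "\<phi> = \<bar>Arg w\<bar>"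
  obtain v where v: "v = rcis (cmod v) \<phi>" "cmod v = cmod w"
    and stable_v: "delay_stable a v \<tau> \<longleftrightarrow> delay_stable a w \<tau>"
    using rcis_abs_Arg[of w] delay_stable_cnj[of a w \<tau>] unfolding \<phi>_def by force
  have "of_real \<tau> * v = rcis (cmod (of_real \<tau> * v)) \<phi>"
    using v \<open>\<tau> > 0\<close> by (metis rcis_def norm_mult norm_of_real abs_of_pos mult.assoc of_real_mult)
  then have "delay_stable a w \<tau> \<longleftrightarrow> 0 < \<tau> * a \<and> cmod (of_real \<tau> * v) < Rfun (- (\<tau> * a)) \<phi>"
    using stable_v delay_stable_rescale[OF \<open>\<tau> > 0\<close>] delay_stable_unit_iff assms(2,3)
    unfolding \<phi>_def by simp
  also have "\<dots> \<longleftrightarrow> 0 < a \<and> cmod w < Rfun (- \<tau> * a) \<phi> / \<tau>"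
    using v(2) \<open>\<tau> > 0\<close> by (simp add: norm_mult zero_less_mult_iff pos_less_divide_eq mult.commute)
  finally show ?thesis unfolding delay_stable_def \<phi>_def .
qed

end
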